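(* In the model described in the context, Algorithm 1 with any threshold $t\ge\tau+f$ satisfies strong accuracy.
   Context: Model. An asynchronous system has client processes (writers, readers, auditors) and $n$ storage objects $o_1,\dots,o_n$. Each $o_k$ is a linearisable loggable read/write register with a log $L_k$ (initially empty). Its rw-write($b$) stores a block; rw-read() returns the current block (or $\perp$) and appends $\langle p_r,\mathit{label}(b)\rangle$ to $L_k$, where $p_r$ is the reader and $\mathit{label}(b)$ identifies the value from which $b$ was derived; rw-getLog() returns $L_k$. A multi-writer multi-reader register over values $\mathbb{V}$ is emulated by information dispersal. An a-write($v$) encodes $v$ into $b_{v_1},\dots,b_{v_n}$ with $b_{v_k}$ sent to $o_k$. Any $\tau$ distinct blocks of $v$ recover $v$, and fewer do not. Reads are fast, concurrency is unlimited, and writes may remain incomplete. Faults. At most $f$ objects are faulty; a faulty object may crash, omit its block, omit log records from auditors, and report records of nonexistent reads (for arbitrary readers and values). Providing set $P_{p_r,v}$: the set of objects that received a write of $b_{v_k}$ and responded $b_{v_k}$ to a read of $p_r$. The value $v$ is effectively read by $p_r$ iff $|P_{p_r,v}|\ge\tau$. Algorithm 1 (a-audit with threshold $t$): 1. Invoke rw-getLog on all $n$ objects in parallel, and wait for responses from at least $n-f$; let $L[k]$ be the log received from $o_k$. 2. For every record $\langle p_r,\mathit{label}(v)\rangle$ in some $L[k]$, let $\mathcal{E}_{p_r,v}=\{k:\langle p_r,\mathit{label}(v)\rangle\in L[k]\}$, and add it to $E_A$ iff $|\mathcal{E}_{p_r,v}|\ge t$. 3. Return $E_A$. Strong accuracy: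 for every correct reader $p_r$ and every value $v$, $|P_{p_r,v}|<\tau$ before the audit implies $\mathcal{E}_{p_r,v}\notin E_A$. *)

theory Defs
  imports Main
begin

text \<open>Operations applied (in linearisation order) to one loggable read/write
  register o_k.  Values are identified with their labels: Wr v is an
  rw-write of the block b_{v_k} derived from value v; Rd p r is an rw-read by
  reader p whose response is r (Some v: the block b_{v_k} of v; None: bottom).\<close>
datatype ('p, 'v) rwop = Wr 'v | Rd 'p "'v option"

definition cur_val :: "('p, 'v) rwop list \<Rightarrow> 'v option" where
  "cur_val H = fold (\<lambda>e s. case e of Wr v \<Rightarrow> Some v | Rd _ _ \<Rightarrow> s) H None"

definition correct_history :: "('p, 'v) rwop list \<Rightarrow> bool" where
  "correct_history H \<longleftrightarrow>
     (\<forall>i < length H. \<forall>p r. H ! i = Rd p r \<longrightarrow> r = cur_val (take i H))"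

definition rw_log :: "('p, 'v) rwop list \<Rightarrow> ('p \<times> 'v option) list" where
  "rw_log H = concat (map (\<lambda>e. case e of Rd p r \<Rightarrow> [(p, r)] | Wr _ \<Rightarrow> []) H)"

definition providing ::
  "nat \<Rightarrow> (nat \<Rightarrow> ('p, 'v) rwop list) \<Rightarrow> 'p \<Rightarrow> 'v \<Rightarrow> nat set" where
  "providing n H p v =
     {k \<in> {1..n}. Wr v \<in> set (H k) \<and> Rd p (Some v) \<in> set (H k)}"

definition evidence ::
  "nat set \<Rightarrow> (nat \<Rightarrow> ('p \<times> 'v option) list) \<Rightarrow> 'p \<Rightarrow> 'v \<Rightarrow> nat set" where
  "evidence R L p v = {k \<in> R. (p, Some v) \<in> set (L k)}"

text \<open>Output E_A of Algorithm 1 with threshold t (pairs (p,v) standing for E_{p,v}).\<close>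
definition audit_output ::
  "nat \<Rightarrow> nat set \<Rightarrow> (nat \<Rightarrow> ('p \<times> 'v option) list) \<Rightarrow> ('p \<times> 'v) set" where
  "audit_output t R L =
     {(p, v). (\<exists>k \<in> R. (p, Some v) \<in> set (L k)) \<and> card (evidence R L p v) \<ge> t}"

end

theory Submission
  imports Defs
begin

text \<open>A correct object logs a read of v by p only when it returned the block of v, and a
  correct register returns that block only after it was written; so every correct object
  in the evidence set E_{p,v} lies in the providing set P_{p,v}.  The at most f faulty
  objects may fabricate records, hence |E_{p,v}| \<le> f + |P_{p,v}| < f + \<tau> \<le> t.\<close>

lemma fold_cur_val_Some_imp_Wr:
  "fold (\<lambda>e s. case e of Wr v \<Rightarrow> Some v | Rd _ _ \<Rightarrow> s) H s = Some v \<Longrightarrow> s = Some v \<or> Wr v \<in> set H"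
  by (induction H arbitrary: s) (auto split: rwop.splits)

lemma cur_val_Some_imp_Wr: "cur_val H = Some v \<Longrightarrow> Wr v \<in> set H"
  unfolding cur_val_def using fold_cur_val_Some_imp_Wr by fastforce

lemma set_rw_log_imp_Rd: "(p, r) \<in> set (rw_log H) \<Longrightarrow> Rd p r \<in> set H"
  unfolding rw_log_def by (auto split: rwop.splits)

lemma correct_history_Rd_imp_Wr:
  assumes "correct_history H" and "Rd p (Some v) \<in> set H"
  shows "Wr v \<in> set H"
proof -
  obtain i where "i < length H" and "H ! i = Rd p (Some v)"
    using assms(2) by (metis in_set_conv_nth)
  then have "Some v = cur_val (take i H)"
    using assms(1) unfolding correct_history_def by blast
  then have "Wr v \<in> set (take i H)"
    using cur_val_Some_imp_Wr by metis
  then show ?thesis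
    by (rule in_set_takeD)
qed

lemma evidence_subset_faulty_Un_providing:
  assumes "R \<subseteq> {1..n}"
    and "\<forall>k \<in> {1..n} - F. correct_history (H k)"
    and "\<forall>k \<in> R - F. L k = rw_log (H k)"
  shows "evidence R L p v \<subseteq> F \<union> providing n H p v"
proof
  fix k assume k: "k \<in> evidence R L p v"
  show "k \<in> F \<union> providing n H p v"
  proof (cases "k \<in> F")
    case False
    have "k \<in> R" and logged: "(p, Some v) \<in> set (L k)"
      using k unfolding evidence_def by auto
    with assms(1) have kn: "k \<in> {1..n}" by auto
    from \<open>k \<in> R\<close> False assms(3) have "L k = rw_log (H k)" by blast
    with logged have rd: "Rd p (Some v) \<in> set (H k)"
      using set_rw_log_imp_Rd by fastforce
    from kn False assms(2) have "correct_history (H k)" by blast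
    then have "Wr v \<in> set (H k)"
      using rd by (rule correct_history_Rd_imp_Wr)
    with kn rd show ?thesis
      unfolding providing_def by auto
  qed simp
qed

lemma card_evidence_le:
  assumes "F \<subseteq> {1..n}" and "R \<subseteq> {1..n}"
    and "\<forall>k \<in> {1..n} - F. correct_history (H k)"
    and "\<forall>k \<in> R - F. L k = rw_log (H k)"
  shows "card (evidence R L p v) \<le> card F + card (providing n H p v)"
proof -
  have "finite F" and "finite (providing n H p v)"
    using assms(1) finite_subset unfolding providing_def by auto
  then have "card (evidence R L p v) \<le> card (F \<union> providing n H p v)"
    using evidence_subset_faulty_Un_providing[OF assms(2-4)] by (simp add: card_mono)
  also have "\<dots> \<le> card F + card (providing n H p v)"
    by (rule card_Un_le)
  finally show ?thesis .
qed

text \<open>The hypothesis card R \<ge> n - f only guarantees that the audit terminates; accuracy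
  does not need it.\<close>

theorem lemma7:
  fixes n f \<tau> t :: nat
    and F R :: "nat set"
    and H :: "nat \<Rightarrow> ('p, 'v) rwop list"
    and L :: "nat \<Rightarrow> ('p \<times> 'v option) list"
    and p :: 'p and v :: 'v
  assumes faulty: "F \<subseteq> {1..n}" "card F \<le> f"
    and responders: "R \<subseteq> {1..n}" "card R \<ge> n - f"
    and correct_objs: "\<forall>k \<in> {1..n} - F. correct_history (H k)"
    and correct_logs: "\<forall>k \<in> R - F. L k = rw_log (H k)"
    and threshold: "t \<ge> \<tau> + f"
    and not_read: "card (providing n H p v) < \<tau>"
  shows "(p, v) \<notin> audit_output t R L"
proof
  assume "(p, v) \<in> audit_output t R L"
  then have "card (evidence R L p v) \<ge> t"
    unfolding audit_output_def by simp
  moreover have "card (evidence R L p v) \<le> card F + card (providing n H p v)"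
    using card_evidence_le[OF faulty(1) responders(1) correct_objs correct_logs] .
  ultimately show False
    using faulty(2) not_read threshold by linarith
qed

end
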